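(* Let $G$ be a finite, simple, connected graph which is not a tree. Then $G$ contains a cycle which is $W(G)/3$-supported.
   Context: For a vertex $r$ of $G$ (the root) and $x\in V(G)$, let $\ell_r(x)=d_G(r,x)$ (the level of $x$). For an integer $n\ge 0$, let $R_r(n)$ be the set of edges $xy\in E(G)$ with $\max\{\ell_r(x),\ell_r(y)\}>n$, and write $x\simeq_n y$ if $x$ and $y$ lie in the same connected component of the graph $(V(G),R_r(n))$ (in particular $x\simeq_n x$). Define $W(r)=\max_{n\ge 0}\max\{d_G(x,y): \ell_r(x)=\ell_r(y)=n,\ x\simeq_n y\}$ and the cycle width $W(G)=\max_{r\in V(G)}W(r)$. A cycle $C$ in $G$ is called $k$-supported (for a real number $k$) if $C$ can be partitioned into three edge-disjoint paths $I_1,I_2,I_3$, with $I_1\cap I_2$, $I_2\cap I_3$ and $I_3\cap I_1$ each consisting of exactly one vertex, such that for every triple of vertices $(u_1,u_2,u_3)$ with $u_i\in V(I_i)$ we have $\max_{i,j\in\{1,2,3\}} d_G(u_i,u_j)\ge k$. *)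

theory Defs
  imports Main "HOL.Real"
begin

definition simple_graph :: "'a set \<Rightarrow> ('a \<Rightarrow> 'a \<Rightarrow> bool) \<Rightarrow> bool" where
  "simple_graph V E \<longleftrightarrow> finite V \<and> (\<forall>x y. E x y \<longrightarrow> x \<in> V \<and> y \<in> V)
     \<and> (\<forall>x y. E x y \<longrightarrow> E y x) \<and> (\<forall>x. \<not> E x x)"

definition connected_graph :: "'a set \<Rightarrow> ('a \<Rightarrow> 'a \<Rightarrow> bool) \<Rightarrow> bool" where
  "connected_graph V E \<longleftrightarrow> V \<noteq> {} \<and> (\<forall>x\<in>V. \<forall>y\<in>V. E\<^sup>*\<^sup>* x y)"

definition gdist :: "('a \<Rightarrow> 'a \<Rightarrow> bool) \<Rightarrow> 'a \<Rightarrow> 'a \<Rightarrow> nat" where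
  "gdist E x y = (LEAST n. (E ^^ n) x y)"

definition is_path :: "'a set \<Rightarrow> ('a \<Rightarrow> 'a \<Rightarrow> bool) \<Rightarrow> 'a list \<Rightarrow> bool" where
  "is_path V E p \<longleftrightarrow> p \<noteq> [] \<and> distinct p \<and> set p \<subseteq> V
     \<and> (\<forall>i. Suc i < length p \<longrightarrow> E (p ! i) (p ! Suc i))"

definition path_edges :: "'a list \<Rightarrow> 'a set set" where
  "path_edges p = {{p ! i, p ! Suc i} | i. Suc i < length p}"

definition is_cycle :: "'a set \<Rightarrow> ('a \<Rightarrow> 'a \<Rightarrow> bool) \<Rightarrow> 'a list \<Rightarrow> bool" where
  "is_cycle V E c \<longleftrightarrow> length c \<ge> 3 \<and> is_path V E c \<and> E (last c) (hd c)"

definition cycle_edges :: "'a list \<Rightarrow> 'a set set" where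
  "cycle_edges c = path_edges c \<union> {{last c, hd c}}"

definition is_tree :: "'a set \<Rightarrow> ('a \<Rightarrow> 'a \<Rightarrow> bool) \<Rightarrow> bool" where
  "is_tree V E \<longleftrightarrow> connected_graph V E \<and> \<not> (\<exists>c. is_cycle V E c)"

definition level :: "('a \<Rightarrow> 'a \<Rightarrow> bool) \<Rightarrow> 'a \<Rightarrow> 'a \<Rightarrow> nat" where
  "level E r x = gdist E r x"

definition R_edge :: "('a \<Rightarrow> 'a \<Rightarrow> bool) \<Rightarrow> 'a \<Rightarrow> nat \<Rightarrow> 'a \<Rightarrow> 'a \<Rightarrow> bool" where
  "R_edge E r n x y \<longleftrightarrow> E x y \<and> max (level E r x) (level E r y) > n"

definition same_comp :: "('a \<Rightarrow> 'a \<Rightarrow> bool) \<Rightarrow> 'a \<Rightarrow> nat \<Rightarrow> 'a \<Rightarrow> 'a \<Rightarrow> bool" where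
  "same_comp E r n x y \<longleftrightarrow> (R_edge E r n)\<^sup>*\<^sup>* x y"

definition W_root :: "'a set \<Rightarrow> ('a \<Rightarrow> 'a \<Rightarrow> bool) \<Rightarrow> 'a \<Rightarrow> nat" where
  "W_root V E r = Max {gdist E x y | n x y. x \<in> V \<and> y \<in> V
       \<and> level E r x = n \<and> level E r y = n \<and> same_comp E r n x y}"

definition cycle_width :: "'a set \<Rightarrow> ('a \<Rightarrow> 'a \<Rightarrow> bool) \<Rightarrow> nat" where
  "cycle_width V E = Max (W_root V E ` V)"

definition k_supported :: "'a set \<Rightarrow> ('a \<Rightarrow> 'a \<Rightarrow> bool) \<Rightarrow> real \<Rightarrow> 'a list \<Rightarrow> bool" where
  "k_supported V E k c \<longleftrightarrow> (\<exists>I1 I2 I3.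
      is_path V E I1 \<and> is_path V E I2 \<and> is_path V E I3
    \<and> set I1 \<subseteq> set c \<and> set I2 \<subseteq> set c \<and> set I3 \<subseteq> set c
    \<and> path_edges I1 \<union> path_edges I2 \<union> path_edges I3 = cycle_edges c
    \<and> path_edges I1 \<inter> path_edges I2 = {} \<and> path_edges I2 \<inter> path_edges I3 = {}
    \<and> path_edges I3 \<inter> path_edges I1 = {}
    \<and> card (set I1 \<inter> set I2) = 1 \<and> card (set I2 \<inter> set I3) = 1
    \<and> card (set I3 \<inter> set I1) = 1
    \<and> (\<forall>u1\<in>set I1. \<forall>u2\<in>set I2. \<forall>u3\<in>set I3.
         real (Max {gdist E u1 u2, gdist E u2 u3, gdist E u1 u3}) \<ge> k))"

end

theory Submission
  imports Defs
begin

text \<open>Choose a root \<open>r\<close> and vertices \<open>x \<simeq>\<^sub>n y\<close> of level \<open>n\<close> with \<open>d(x, y) = W(G)\<close>.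
  Join \<open>x\<close> to \<open>y\<close> by a path \<open>Q\<close> through vertices of level at least \<open>n\<close>, and follow
  geodesics from \<open>x\<close> and \<open>y\<close> towards \<open>r\<close> until they first meet. These three paths form a cycle.
  If \<open>u\<^sub>1\<close> lies on \<open>Q\<close> and \<open>u\<^sub>3\<close>, \<open>u\<^sub>2\<close> lie \<open>i\<close>, \<open>j\<close> steps below \<open>x\<close>, \<open>y\<close> on the geodesics,
  comparing levels gives \<open>i \<le> d(u\<^sub>1, u\<^sub>3)\<close> and \<open>j \<le> d(u\<^sub>1, u\<^sub>2)\<close>, hence
  \<open>d(x, y) \<le> i + d(u\<^sub>3, u\<^sub>2) + j\<close> is at most three times the largest of the three pairwise
  distances. If \<open>W(G) = 0\<close>, any cycle is \<open>0\<close>-supported.\<close>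

section \<open>Paths as vertex lists\<close>

lemma is_path_iff_successively:
  "is_path V E p \<longleftrightarrow> p \<noteq> [] \<and> distinct p \<and> set p \<subseteq> V \<and> successively E p"
  unfolding is_path_def successively_conv_nth by auto

lemma append_tl_eq_butlast_append:
  "xs \<noteq> [] \<Longrightarrow> ys \<noteq> [] \<Longrightarrow> last xs = hd ys \<Longrightarrow> xs @ tl ys = butlast xs @ ys"
  by (metis append_butlast_last_id append_Cons append_assoc append_Nil list.collapse)

lemma hd_butlast: "butlast xs \<noteq> [] \<Longrightarrow> hd (butlast xs) = hd xs"
  by (cases xs) auto

lemma set_append_tl:
  "xs \<noteq> [] \<Longrightarrow> last xs = hd ys \<Longrightarrow> set (xs @ tl ys) = set xs \<union> set ys"
  using last_in_set[of xs] by (cases ys) auto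

lemma set_butlast_Int_eq_empty:
  assumes "distinct xs" "set xs \<inter> A \<subseteq> {last xs}"
  shows "set (butlast xs) \<inter> A = {}"
proof -
  have "last xs \<notin> set (butlast xs)" if "xs \<noteq> []"
    using assms(1) that by (metis append_butlast_last_id distinct_append disjoint_iff list.set_intros(1))
  then show ?thesis using assms(2) in_set_butlastD by fastforce
qed

lemma successively_append_tl:
  assumes "xs \<noteq> []" "ys \<noteq> []" "last xs = hd ys"
  shows "successively R (xs @ tl ys) \<longleftrightarrow> successively R xs \<and> successively R ys"
proof -
  obtain zs where "xs = zs @ [hd ys]" using assms by (metis append_butlast_last_id)
  then show ?thesis using assms(2) by (auto simp: successively_append_iff)
qed

lemma successively_map_upt:
  "(\<And>i. i < m \<Longrightarrow> R (f i) (f (Suc i))) \<Longrightarrow> successively R (map f [0..<Suc m])"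
  by (simp add: successively_map successively_conv_nth del: upt_Suc)

lemma successively_invariant:
  "successively R xs \<Longrightarrow> P (hd xs) \<Longrightarrow> (\<And>x y. R x y \<Longrightarrow> P y) \<Longrightarrow> z \<in> set xs \<Longrightarrow> P z"
  by (induction R xs rule: successively.induct) auto

lemma rtranclp_imp_distinct_successively:
  assumes "R\<^sup>*\<^sup>* x y"
  obtains ps where "ps \<noteq> []" "hd ps = x" "last ps = y" "distinct ps" "successively R ps"
  using assms
proof (induction arbitrary: thesis rule: rtranclp_induct)
  case base
  show ?case by (rule base[of "[x]"]) simp_all
next
  case (step y z)
  obtain ps where ps: "ps \<noteq> []" "hd ps = x" "last ps = y" "distinct ps" "successively R ps"
    using step.IH by blast
  show ?case
  proof (cases "z \<in> set ps")
    case True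
    then obtain i where i: "i < length ps" "ps ! i = z" by (meson in_set_conv_nth)
    define ps' where "ps' = take (Suc i) ps"
    show ?thesis
    proof (rule step.prems)
      show "ps' \<noteq> []" "hd ps' = x" "distinct ps'"
        using ps(1,2,4) by (simp_all add: ps'_def)
      show "last ps' = z" using i by (simp add: ps'_def take_Suc_conv_app_nth)
      show "successively R ps'"
        using ps(5) successively_append_iff[of R ps' "drop (Suc i) ps"] by (simp add: ps'_def)
    qed
  next
    case False
    show ?thesis
    proof (rule step.prems)
      show "ps @ [z] \<noteq> []" "hd (ps @ [z]) = x" "last (ps @ [z]) = z" "distinct (ps @ [z])"
        using ps(1,2,4) False by simp_all
      show "successively R (ps @ [z])"
        using ps(1,3,5) step.hyps(2) by (simp add: successively_append_iff)
    qed
  qed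
qed

lemma path_edges_conv_image:
  "path_edges xs = (\<lambda>i. {xs ! i, xs ! Suc i}) ` {i. Suc i < length xs}"
  unfolding path_edges_def by blast

lemma path_edges_Nil [simp]: "path_edges [] = {}"
  and path_edges_singleton [simp]: "path_edges [x] = {}"
  by (simp_all add: path_edges_def)

lemma path_edges_Cons_Cons [simp]:
  "path_edges (x # y # zs) = insert {x, y} (path_edges (y # zs))"
proof -
  have "{i. Suc i < length (x # y # zs)} = insert 0 (Suc ` {i. Suc i < length (y # zs)})"
    by (auto simp: image_iff) (metis Suc_less_eq not0_implies_Suc)
  then show ?thesis unfolding path_edges_conv_image by (simp add: image_image)
qed

lemma path_edges_append_Cons:
  "path_edges (xs @ y # ys) = path_edges (xs @ [y]) \<union> path_edges (y # ys)"
proof (induction xs)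
  case (Cons a xs) then show ?case by (cases xs) auto
qed auto

lemma path_edges_append_tl:
  assumes "xs \<noteq> []" "ys \<noteq> []" "last xs = hd ys"
  shows "path_edges (xs @ tl ys) = path_edges xs \<union> path_edges ys"
proof -
  obtain zs where "xs = zs @ [hd ys]" using assms by (metis append_butlast_last_id)
  then show ?thesis using assms(2) path_edges_append_Cons[of zs "hd ys" "tl ys"] by simp
qed

lemma cycle_edges_conv_path_edges: "c \<noteq> [] \<Longrightarrow> cycle_edges c = path_edges (c @ [hd c])"
  using path_edges_append_tl[of c "[last c, hd c]"] by (simp add: cycle_edges_def)

lemma path_edge_subset_card:
  assumes "e \<in> path_edges xs" "distinct xs"
  shows "e \<subseteq> set xs" "card e = 2"
proof -
  obtain i where i: "Suc i < length xs" "e = {xs ! i, xs ! Suc i}"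
    using assms(1) unfolding path_edges_def by blast
  then show "e \<subseteq> set xs" by simp
  have "xs ! i \<noteq> xs ! Suc i" using i(1) assms(2) by (simp add: nth_eq_iff_index_eq)
  then show "card e = 2" using i(2) by simp
qed

lemma path_edges_disjoint_if_card_Int:
  assumes "distinct xs" "distinct ys" "card (set xs \<inter> set ys) = 1"
  shows "path_edges xs \<inter> path_edges ys = {}"
proof (rule ccontr)
  assume "path_edges xs \<inter> path_edges ys \<noteq> {}"
  then obtain e where "e \<in> path_edges xs" "e \<in> path_edges ys" by blast
  then have "e \<subseteq> set xs \<inter> set ys" "card e = 2"
    using path_edge_subset_card assms(1,2) by blast+
  then show False using assms(3) card_mono[of "set xs \<inter> set ys" e] by simp
qed

section \<open>Cycles glued from three paths\<close>

lemma cycle_of_three_paths: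
  assumes paths: "is_path V E I1" "is_path V E I2" "is_path V E I3"
    and lengths: "length I1 \<ge> 2" "length I2 \<ge> 2" "length I3 \<ge> 2"
    and ends: "last I1 = hd I2" "last I2 = hd I3" "last I3 = hd I1"
    and meets: "set I1 \<inter> set I2 = {hd I2}" "set I2 \<inter> set I3 = {hd I3}"
      "set I3 \<inter> set I1 = {hd I1}"
  defines "c \<equiv> butlast I1 @ butlast I2 @ butlast I3"
  shows "is_cycle V E c" "set c = set I1 \<union> set I2 \<union> set I3"
    "cycle_edges c = path_edges I1 \<union> path_edges I2 \<union> path_edges I3"
proof -
  have ne: "I1 \<noteq> []" "I2 \<noteq> []" "I3 \<noteq> []" "butlast I1 \<noteq> []" "butlast I2 \<noteq> []"
    using lengths by (auto simp flip: length_greater_0_conv)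
  have paths': "distinct I1" "distinct I2" "distinct I3"
      "successively E I1" "successively E I2" "successively E I3"
      "set I1 \<subseteq> V" "set I2 \<subseteq> V" "set I3 \<subseteq> V"
    using paths by (simp_all add: is_path_iff_successively)
  define L where "L = I1 @ tl (I2 @ tl I3)"
  have I23: "I2 @ tl I3 = butlast I2 @ I3" "I2 @ tl I3 \<noteq> []" "hd (I2 @ tl I3) = last I1"
    using ne ends(1,2) by (simp_all add: append_tl_eq_butlast_append hd_butlast)
  then have "L = butlast I1 @ butlast I2 @ I3"
    using ne by (simp add: L_def append_tl_eq_butlast_append)
  moreover have "butlast I3 @ [hd I1] = I3"
    using ne(3) ends(3) by (metis append_butlast_last_id)
  ultimately have L_eq: "L = c @ [hd c]"
    using ne by (simp add: c_def hd_butlast)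
  have c_ne: "c \<noteq> []" using ne by (simp add: c_def)
  have "successively E L"
    using paths'(4-6) successively_append_tl[OF ne(2,3) ends(2)]
      successively_append_tl[OF ne(1) I23(2) I23(3)[symmetric]] by (simp add: L_def)
  then have walk: "successively E c" "E (last c) (hd c)"
    using L_eq c_ne successively_append_iff[of E c "[hd c]"] by simp_all
  have "set L = set I1 \<union> set I2 \<union> set I3"
    using set_append_tl[OF ne(2) ends(2)] set_append_tl[OF ne(1) I23(3)[symmetric]]
    by (simp add: L_def Un_assoc)
  moreover have "set L = set c"
    using L_eq c_ne by (simp add: insert_absorb)
  ultimately show set_c: "set c = set I1 \<union> set I2 \<union> set I3" by simp
  have "path_edges L = path_edges I1 \<union> path_edges I2 \<union> path_edges I3"
    using path_edges_append_tl[OF ne(2,3) ends(2)]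
      path_edges_append_tl[OF ne(1) I23(2) I23(3)[symmetric]] by (simp add: L_def Un_assoc)
  then show "cycle_edges c = path_edges I1 \<union> path_edges I2 \<union> path_edges I3"
    using L_eq c_ne by (simp add: cycle_edges_conv_path_edges)
  have "set (butlast I1) \<inter> set I2 = {}" "set (butlast I2) \<inter> set I3 = {}"
    "set (butlast I3) \<inter> set I1 = {}"
    by (intro set_butlast_Int_eq_empty; simp add: meets ends paths'(1-3))+
  then have "distinct c"
    using paths'(1-3) unfolding c_def distinct_append set_append
    by (auto intro: distinct_butlast dest: in_set_butlastD)
  moreover have "length c \<ge> 3" using lengths by (simp add: c_def)
  ultimately show "is_cycle V E c"
    using walk set_c paths'(7-9) c_ne by (simp add: is_cycle_def is_path_iff_successively)
qed

lemma k_supported_if_three_paths: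
  assumes paths: "is_path V E I1" "is_path V E I2" "is_path V E I3"
    and lengths: "length I1 \<ge> 2" "length I2 \<ge> 2" "length I3 \<ge> 2"
    and ends: "last I1 = hd I2" "last I2 = hd I3" "last I3 = hd I1"
    and meets: "set I1 \<inter> set I2 = {hd I2}" "set I2 \<inter> set I3 = {hd I3}"
      "set I3 \<inter> set I1 = {hd I1}"
    and support: "\<forall>u1\<in>set I1. \<forall>u2\<in>set I2. \<forall>u3\<in>set I3.
         real (Max {gdist E u1 u2, gdist E u2 u3, gdist E u1 u3}) \<ge> k"
  shows "\<exists>c. is_cycle V E c \<and> k_supported V E k c"
proof -
  obtain c where c: "is_cycle V E c" "set c = set I1 \<union> set I2 \<union> set I3"
      "cycle_edges c = path_edges I1 \<union> path_edges I2 \<union> path_edges I3"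
    using cycle_of_three_paths[OF paths lengths ends meets] by blast
  have distinct: "distinct I1" "distinct I2" "distinct I3"
    using paths by (simp_all add: is_path_def)
  have cards: "card (set I1 \<inter> set I2) = 1" "card (set I2 \<inter> set I3) = 1"
    "card (set I3 \<inter> set I1) = 1"
    using meets by simp_all
  have "k_supported V E k c"
    unfolding k_supported_def
    by (rule exI[of _ I1], rule exI[of _ I2], rule exI[of _ I3])
      (use paths c(2,3) cards support
        path_edges_disjoint_if_card_Int[OF distinct(1,2) cards(1)]
        path_edges_disjoint_if_card_Int[OF distinct(2,3) cards(2)]
        path_edges_disjoint_if_card_Int[OF distinct(3,1) cards(3)] in auto)
  then show ?thesis using c(1) by blast
qed

lemma exists_0_supported_cycle:
  assumes "is_cycle V E c"
  shows "\<exists>c. is_cycle V E c \<and> k_supported V E 0 c"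
proof -
  obtain a b cs where c: "c = a # b # cs" "cs \<noteq> []"
    using assms unfolding is_cycle_def
    by (metis One_nat_def Suc_le_length_iff length_Cons list.size(3) numeral_3_eq_3 not_one_le_zero)
  have "distinct c" "set c \<subseteq> V" "successively E c" "E (last c) (hd c)"
    using assms by (simp_all add: is_cycle_def is_path_iff_successively)
  then show ?thesis
    using c by (intro k_supported_if_three_paths[of V E "[a, b]" "b # cs" "[last cs, a]"])
      (auto simp: is_path_iff_successively Suc_le_eq)
qed

section \<open>Distances and levels\<close>

lemma gdist_le_if_relpowp: "(E ^^ n) x y \<Longrightarrow> gdist E x y \<le> n"
  unfolding gdist_def by (rule Least_le)

lemma gdist_self [simp]: "gdist E x x = 0"
  using gdist_le_if_relpowp[of 0 E x x] by simp

lemma gdist_le_1_if_adjacent: "E x y \<Longrightarrow> gdist E x y \<le> 1"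
  by (rule gdist_le_if_relpowp) auto

lemma relpowp_of_chain:
  "(\<forall>i<m. R (p i) (p (Suc i))) \<Longrightarrow> i \<le> m \<Longrightarrow> (R ^^ i) (p 0) (p i)"
  by (induction i) (auto intro: relpowp_Suc_I)

definition geodesic_to_root ::
    "'a set \<Rightarrow> ('a \<Rightarrow> 'a \<Rightarrow> bool) \<Rightarrow> 'a \<Rightarrow> nat \<Rightarrow> (nat \<Rightarrow> 'a) \<Rightarrow> bool" where
  "geodesic_to_root V E r n p \<longleftrightarrow>
     (\<forall>i\<le>n. p i \<in> V \<and> level E r (p i) = n - i) \<and> (\<forall>i<n. E (p i) (p (Suc i)))"

locale connected_simple_graph =
  fixes V :: "'a set" and E :: "'a \<Rightarrow> 'a \<Rightarrow> bool"
  assumes simple: "simple_graph V E" and connected: "connected_graph V E"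
begin

lemma adjacent_sym: "E x y \<Longrightarrow> E y x"
  using simple by (simp add: simple_graph_def)

lemma adjacent_in_V: "E x y \<Longrightarrow> x \<in> V \<and> y \<in> V"
  using simple by (simp add: simple_graph_def)

lemma finite_V: "finite V"
  using simple by (simp add: simple_graph_def)

lemma V_nonempty: "V \<noteq> {}"
  using connected by (simp add: connected_graph_def)

lemma relpowp_gdist: "x \<in> V \<Longrightarrow> y \<in> V \<Longrightarrow> (E ^^ gdist E x y) x y"
  using connected unfolding gdist_def connected_graph_def
  by (metis LeastI rtranclp_power)

lemma relpowp_sym: "(E ^^ n) x y \<Longrightarrow> (E ^^ n) y x"
proof (induction n arbitrary: y)
  case (Suc n)
  then obtain w where "(E ^^ n) x w" "E w y" by (meson relpowp_Suc_E)
  then show ?case using Suc.IH adjacent_sym by (meson relpowp_Suc_I2)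
qed simp

lemma gdist_commute: "x \<in> V \<Longrightarrow> y \<in> V \<Longrightarrow> gdist E x y = gdist E y x"
  by (meson antisym gdist_le_if_relpowp relpowp_gdist relpowp_sym)

lemma gdist_triangle:
  assumes "x \<in> V" "y \<in> V" "z \<in> V"
  shows "gdist E x z \<le> gdist E x y + gdist E y z"
proof (rule gdist_le_if_relpowp)
  show "(E ^^ (gdist E x y + gdist E y z)) x z"
    using relpowp_gdist[of x y] relpowp_gdist[of y z] assms by (auto simp: relpowp_add)
qed

lemma gdist_eq_0_iff: "x \<in> V \<Longrightarrow> y \<in> V \<Longrightarrow> gdist E x y = 0 \<longleftrightarrow> x = y"
  using relpowp_gdist[of x y] by auto

lemma level_le_level_add_gdist:
  "r \<in> V \<Longrightarrow> u \<in> V \<Longrightarrow> v \<in> V \<Longrightarrow> level E r v \<le> level E r u + gdist E u v"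
  unfolding level_def by (rule gdist_triangle)

lemma level_adjacent_le: "r \<in> V \<Longrightarrow> E u v \<Longrightarrow> level E r v \<le> level E r u + 1"
  using level_le_level_add_gdist[of r u v] gdist_le_1_if_adjacent[of E u v] adjacent_in_V
  by fastforce

lemma is_path_rev: "is_path V E p \<Longrightarrow> is_path V E (rev p)"
  by (auto simp: is_path_iff_successively successively_rev adjacent_sym elim: successively_mono)

lemma exists_geodesic_to_root:
  assumes "r \<in> V"
  shows "v \<in> V \<Longrightarrow> \<exists>p. p 0 = v \<and> geodesic_to_root V E r (level E r v) p"
proof (induction "level E r v" arbitrary: v)
  case 0
  then show ?case by (intro exI[of _ "\<lambda>_. v"]) (simp add: geodesic_to_root_def)
next
  case (Suc m)
  have "(E ^^ Suc m) r v"
    using relpowp_gdist[OF assms Suc.prems] Suc.hyps(2) by (simp add: level_def)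
  then obtain w where w: "(E ^^ m) r w" "E w v" by (meson relpowp_Suc_E)
  have w_in_V: "w \<in> V" using adjacent_in_V w(2) by blast
  have "level E r w \<le> m" using gdist_le_if_relpowp[OF w(1)] by (simp add: level_def)
  moreover have "Suc m \<le> level E r w + 1"
    using level_adjacent_le[OF assms w(2)] Suc.hyps(2) by simp
  ultimately have "m = level E r w" by simp
  then obtain p where p: "p 0 = w" "geodesic_to_root V E r m p"
    using Suc.hyps(1)[OF _ w_in_V] by blast
  define p' where "p' i = (if i = 0 then v else p (i - 1))" for i
  have "geodesic_to_root V E r (Suc m) p'"
    unfolding geodesic_to_root_def
  proof (intro allI impI conjI)
    fix i assume "i \<le> Suc m"
    then show "p' i \<in> V" "level E r (p' i) = Suc m - i"
      using p Suc.prems Suc.hyps(2) by (cases i; auto simp: p'_def geodesic_to_root_def)+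
  next
    fix i assume "i < Suc m"
    then show "E (p' i) (p' (Suc i))"
      using p adjacent_sym[OF w(2)] by (cases i) (auto simp: p'_def geodesic_to_root_def)
  qed
  then show ?case using Suc.hyps(2) by (intro exI[of _ p']) (simp add: p'_def)
qed

lemma geodesic_to_root_last:
  "r \<in> V \<Longrightarrow> geodesic_to_root V E r n p \<Longrightarrow> p n = r"
  using gdist_eq_0_iff[of r "p n"] by (simp add: geodesic_to_root_def level_def)

lemma geodesic_to_root_index_eq:
  assumes "geodesic_to_root V E r n p" "geodesic_to_root V E r n q"
    and "i \<le> n" "j \<le> n" "p i = q j"
  shows "i = j"
proof -
  have "n - i = n - j"
    using assms unfolding geodesic_to_root_def by metis
  then show ?thesis using assms(3,4) by simp
qed

lemma gdist_geodesic_to_root_le: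
  "geodesic_to_root V E r n p \<Longrightarrow> i \<le> n \<Longrightarrow> gdist E (p 0) (p i) \<le> i"
  by (intro gdist_le_if_relpowp relpowp_of_chain) (simp_all add: geodesic_to_root_def)

lemma is_path_geodesic_to_root_prefix:
  assumes "geodesic_to_root V E r n p" "k \<le> n"
  shows "is_path V E (map p [0..<Suc k])"
proof -
  have "inj_on p {0..<Suc k}"
    using geodesic_to_root_index_eq[OF assms(1) assms(1)] assms(2) by (intro inj_onI) simp
  moreover have "successively E (map p [0..<Suc k])"
    using assms by (intro successively_map_upt) (simp add: geodesic_to_root_def)
  moreover have "set (map p [0..<Suc k]) \<subseteq> V"
    using assms by (auto simp: geodesic_to_root_def)
  ultimately show ?thesis by (simp add: is_path_iff_successively distinct_map del: upt_Suc)
qed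

lemma geodesics_to_root_first_meet:
  assumes "r \<in> V" "geodesic_to_root V E r n p" "geodesic_to_root V E r n q" "p 0 \<noteq> q 0"
  obtains k where "0 < k" "k \<le> n" "p k = q k" "p ` {..k} \<inter> q ` {..k} = {p k}"
proof -
  define k where "k = (LEAST i. p i = q i)"
  have "p n = q n"
    using geodesic_to_root_last[OF assms(1,2)] geodesic_to_root_last[OF assms(1,3)] by simp
  then have meet: "p k = q k" and "k \<le> n"
    unfolding k_def by (auto intro: LeastI Least_le)
  moreover have "0 < k" using meet assms(4) by (cases k) auto
  moreover have "i = k" if "i \<le> k" "j \<le> k" "p i = q j" for i j
  proof -
    have "i = j" using geodesic_to_root_index_eq[OF assms(2,3)] that \<open>k \<le> n\<close> by simp
    then have "\<not> i < k" using that(3) not_less_Least unfolding k_def by blast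
    then show ?thesis using that(1) by simp
  qed
  then have "p ` {..k} \<inter> q ` {..k} = {p k}"
    using meet by (auto intro: rev_image_eqI)
  ultimately show ?thesis using that by blast
qed

lemma geodesic_to_root_index_le_gdist:
  assumes "r \<in> V" "geodesic_to_root V E r n p" "i \<le> n" "u \<in> V" "n \<le> level E r u"
  shows "i \<le> gdist E u (p i)"
proof -
  have "p i \<in> V" "level E r (p i) = n - i"
    using assms(2,3) by (simp_all add: geodesic_to_root_def)
  then show ?thesis
    using level_le_level_add_gdist[OF assms(1) \<open>p i \<in> V\<close> assms(4)] assms(3,5)
      gdist_commute[OF assms(4) \<open>p i \<in> V\<close>] by simp
qed

lemma geodesic_to_root_Int_above_level:
  assumes "r \<in> V" "geodesic_to_root V E r n p" "k \<le> n"
    and "\<forall>z\<in>S. z \<in> V \<and> n \<le> level E r z"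
  shows "p ` {..k} \<inter> S \<subseteq> {p 0}"
proof
  fix z assume "z \<in> p ` {..k} \<inter> S"
  then obtain i where "i \<le> k" "z = p i" "z \<in> S" by auto
  then have "i = 0"
    using geodesic_to_root_index_le_gdist[OF assms(1,2), of i z] assms(3,4) by simp
  then show "z \<in> {p 0}" using \<open>z = p i\<close> by simp
qed

section \<open>The supported cycle\<close>

lemma exists_path_above_level:
  assumes "r \<in> V" "x \<in> V" "level E r x = n" "same_comp E r n x y"
  obtains Q where "is_path V E Q" "hd Q = x" "last Q = y" "\<forall>z\<in>set Q. n \<le> level E r z"
proof -
  obtain Q where Q: "Q \<noteq> []" "hd Q = x" "last Q = y" "distinct Q"
      "successively (R_edge E r n) Q"
    using assms(4) unfolding same_comp_def by (rule rtranclp_imp_distinct_successively)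
  have R_edge_above: "v \<in> V \<and> n \<le> level E r v" if "R_edge E r n u v" for u v
    using that level_adjacent_le[OF assms(1) adjacent_sym] adjacent_in_V
    unfolding R_edge_def by fastforce
  have above: "z \<in> V \<and> n \<le> level E r z" if "z \<in> set Q" for z
    using successively_invariant[OF Q(5), of "\<lambda>z. z \<in> V \<and> n \<le> level E r z"]
      R_edge_above that Q(2) assms(2,3) by blast
  have "successively E Q"
    using Q(5) by (rule successively_mono) (simp add: R_edge_def)
  then have "is_path V E Q"
    using Q(1,4) above by (auto simp: is_path_iff_successively)
  then show ?thesis using that Q(2,3) above by blast
qed

lemma gdist_le_3_Max:
  assumes "x \<in> V" "y \<in> V" "u1 \<in> V" "u2 \<in> V" "u3 \<in> V"
    and "gdist E x u3 \<le> gdist E u1 u3" "gdist E y u2 \<le> gdist E u1 u2"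
  shows "gdist E x y \<le> 3 * Max {gdist E u1 u2, gdist E u2 u3, gdist E u1 u3}"
proof -
  have "gdist E x y \<le> gdist E x u3 + gdist E u3 u2 + gdist E u2 y"
    using gdist_triangle[of x u3 y] gdist_triangle[of u3 u2 y] assms(1-5) by simp
  also have "\<dots> \<le> gdist E u1 u3 + gdist E u2 u3 + gdist E u1 u2"
    using assms gdist_commute[of u2 y] gdist_commute[of u3 u2] by simp
  also have "\<dots> \<le> 3 * Max {gdist E u1 u2, gdist E u2 u3, gdist E u1 u3}"
    by simp
  finally show ?thesis .
qed

lemma gdist_le_3_Max_on_geodesics:
  assumes "r \<in> V" "geodesic_to_root V E r n p" "geodesic_to_root V E r n q"
    and "i \<le> n" "j \<le> n" "u \<in> V" "n \<le> level E r u"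
  shows "gdist E (p 0) (q 0) \<le> 3 * Max {gdist E u (q j), gdist E (q j) (p i), gdist E u (p i)}"
proof (rule gdist_le_3_Max)
  show "p 0 \<in> V" "q 0 \<in> V" "q j \<in> V" "p i \<in> V"
    using assms(2-5) by (simp_all add: geodesic_to_root_def)
  show "u \<in> V" by fact
  show "gdist E (p 0) (p i) \<le> gdist E u (p i)"
    using gdist_geodesic_to_root_le[OF assms(2,4)]
      geodesic_to_root_index_le_gdist[OF assms(1,2,4,6,7)] by simp
  show "gdist E (q 0) (q j) \<le> gdist E u (q j)"
    using gdist_geodesic_to_root_le[OF assms(3,5)]
      geodesic_to_root_index_le_gdist[OF assms(1,3,5,6,7)] by simp
qed

lemma supported_cycle_of_level_pair:
  assumes r: "r \<in> V" and x: "x \<in> V" "level E r x = n" and y: "y \<in> V" "level E r y = n"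
    and comp: "same_comp E r n x y" and "x \<noteq> y"
  shows "\<exists>c. is_cycle V E c \<and> k_supported V E (real (gdist E x y) / 3) c"
proof -
  obtain p where p: "p 0 = x" "geodesic_to_root V E r n p"
    using exists_geodesic_to_root[OF r x(1)] x(2) by blast
  obtain q where q: "q 0 = y" "geodesic_to_root V E r n q"
    using exists_geodesic_to_root[OF r y(1)] y(2) by blast
  obtain k where k: "0 < k" "k \<le> n" "p k = q k" "p ` {..k} \<inter> q ` {..k} = {p k}"
    using geodesics_to_root_first_meet[OF r p(2) q(2)] p(1) q(1) \<open>x \<noteq> y\<close> by metis
  obtain Q where Q: "is_path V E Q" "hd Q = x" "last Q = y"
      and above: "\<forall>z\<in>set Q. n \<le> level E r z"
    using exists_path_above_level[OF r x comp] by blast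
  have Q_above: "\<forall>z\<in>set Q. z \<in> V \<and> n \<le> level E r z"
    using Q(1) above by (auto simp: is_path_def)
  have "Q \<noteq> []" using Q(1) by (simp add: is_path_def)
  define A where "A = map p [0..<Suc k]"
  define D where "D = map q [0..<Suc k]"
  have set_A: "set A = p ` {..k}" and set_D: "set D = q ` {..k}"
    by (auto simp: A_def D_def simp del: upt_Suc)
  have "A \<noteq> []" by (simp add: A_def del: upt_Suc)
  have ends: "hd A = x" "last A = p k" "hd D = y" "last D = q k"
    using p(1) q(1) by (simp_all add: A_def D_def hd_map last_map del: upt_Suc)
  have paths: "is_path V E Q" "is_path V E D" "is_path V E (rev A)"
    using Q(1) is_path_geodesic_to_root_prefix[OF q(2) k(2)]
      is_path_rev[OF is_path_geodesic_to_root_prefix[OF p(2) k(2)]]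
    by (simp_all add: A_def D_def del: upt_Suc)
  have lengths: "length Q \<ge> 2" "length D \<ge> 2" "length (rev A) \<ge> 2"
    using \<open>Q \<noteq> []\<close> Q(2,3) \<open>x \<noteq> y\<close> k(1) by (cases Q; auto simp: A_def D_def Suc_le_eq)+
  have "x \<in> set A" "y \<in> set D"
    unfolding set_A set_D using p(1) q(1) by (metis atMost_iff image_eqI le0)+
  moreover have "y \<in> set Q" "x \<in> set Q"
    using Q(2,3) \<open>Q \<noteq> []\<close> by auto
  moreover have "set D \<inter> set Q \<subseteq> {y}" "set A \<inter> set Q \<subseteq> {x}"
    using geodesic_to_root_Int_above_level[OF r q(2) k(2) Q_above]
      geodesic_to_root_Int_above_level[OF r p(2) k(2) Q_above] set_A set_D p(1) q(1) by simp_all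
  ultimately have meets: "set Q \<inter> set D = {hd D}" "set D \<inter> set (rev A) = {hd (rev A)}"
    "set (rev A) \<inter> set Q = {hd Q}"
    using ends k(4) set_A set_D Q(2) by (auto simp: hd_rev)
  have path_ends: "last Q = hd D" "last D = hd (rev A)" "last (rev A) = hd Q"
    using ends Q(2,3) k(3) \<open>A \<noteq> []\<close> by (simp_all add: hd_rev last_rev)
  have support: "real (gdist E x y) / 3 \<le> real (Max {gdist E u1 u2, gdist E u2 u3, gdist E u1 u3})"
    if u: "u1 \<in> set Q" "u2 \<in> set D" "u3 \<in> set (rev A)" for u1 u2 u3
  proof -
    obtain i j where "i \<le> k" "u3 = p i" "j \<le> k" "u2 = q j"
      using u(2,3) set_A set_D by auto
    then have "gdist E x y \<le> 3 * Max {gdist E u1 u2, gdist E u2 u3, gdist E u1 u3}"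
      using gdist_le_3_Max_on_geodesics[OF r p(2) q(2), of i j u1] u(1) Q_above k(2) p(1) q(1)
      by simp
    then show ?thesis by linarith
  qed
  show ?thesis
    by (rule k_supported_if_three_paths[OF paths lengths path_ends meets]) (intro ballI support)
qed

lemma cycle_width_attained:
  obtains r x y n where "r \<in> V" "x \<in> V" "y \<in> V" "level E r x = n" "level E r y = n"
    "same_comp E r n x y" "gdist E x y = cycle_width V E"
proof -
  have "cycle_width V E \<in> W_root V E ` V"
    unfolding cycle_width_def using finite_V V_nonempty by (intro Max_in) simp_all
  then obtain r where r: "r \<in> V" "cycle_width V E = W_root V E r" by auto
  define S where "S = {gdist E x y | n x y. x \<in> V \<and> y \<in> V
       \<and> level E r x = n \<and> level E r y = n \<and> same_comp E r n x y}"
  have "S \<subseteq> (\<lambda>(x, y). gdist E x y) ` (V \<times> V)"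
    unfolding S_def by auto
  then have "finite S" using finite_V by (auto intro: finite_subset)
  moreover have "gdist E r r \<in> S"
    unfolding S_def same_comp_def using r(1) by blast
  ultimately have "Max S \<in> S" by (auto intro: Max_in)
  then show ?thesis
    using that r unfolding S_def W_root_def by auto
qed

end

theorem mainTheorem3:
  fixes V :: "'a set" and E :: "'a \<Rightarrow> 'a \<Rightarrow> bool"
  assumes "simple_graph V E" and "connected_graph V E" and "\<not> is_tree V E"
  shows "\<exists>c. is_cycle V E c \<and> k_supported V E (real (cycle_width V E) / 3) c"
proof -
  interpret connected_simple_graph V E
    using assms(1,2) by unfold_locales
  obtain c where c: "is_cycle V E c"
    using assms(2,3) by (auto simp: is_tree_def)
  obtain r x y n where rxy: "r \<in> V" "x \<in> V" "y \<in> V" "level E r x = n" "level E r y = n"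
      "same_comp E r n x y" and width: "gdist E x y = cycle_width V E"
    by (rule cycle_width_attained)
  show ?thesis
  proof (cases "x = y")
    case True
    then have "cycle_width V E = 0" using width by simp
    then show ?thesis using exists_0_supported_cycle[OF c] by simp
  next
    case False
    then show ?thesis
      using supported_cycle_of_level_pair[OF rxy(1,2,4,3,5,6)] width by simp
  qed
qed

end
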